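(* Let $l\geq 2$ and $K_l=K(10(l-1)+7,4(l-1)+3)$. With respect to the presentation $\pi_1(S^3\setminus K_l)=\langle a,b\mid va=bv\rangle$, $v=c^{l-1}d$, $c=aba^{-1}b^{-1}abab^{-1}a^{-1}b$, $d=aba^{-1}b^{-1}ab$, the Riley polynomial $\phi_{K_l}(x,y)$ is such that $\phi_{K_l}(2\cos(\pi/n),y)$ has a real root $y_n>2$ in the following cases: (1) $n\geq 5$ when $l=2$; (2) $n\geq 4$ when $l=3$; (3) $n\geq 3$ when $l\geq 4$.
   Context: $K(p,q)$ is the two-bridge knot with fraction $p/q$; $a,b$ are meridians. Riley polynomial: with $A=\begin{bmatrix}s&1\\0&s^{-1}\end{bmatrix}$, $B=\begin{bmatrix}s&0\\2-y&s^{-1}\end{bmatrix}$ and $V$ the word $v$ evaluated at $A,B$, the $(1,2)$-entry of $VA-BV$ equals $f(s+s^{-1},y)$ for some $f\in\mathbb{Z}[x,y]$, and $\phi_{K_l}:=f$. Explicitly $\phi_{K_l}=S_{l-1}(\lambda)\alpha-S_{l-2}(\lambda)\beta$ where $S_n$ are Chebyshev polynomials ($S_0=1$, $S_1=z$, $S_{n+1}=zS_n-S_{n-1}$), $\lambda(x,y)=9x^2-12x^4+4x^6-5y+10x^2y+2x^4y-4x^6y-11x^2y^2+8x^4y^2+x^6y^2+5y^3-4x^2y^3-3x^4y^3+3x^2y^4-y^5$, $\alpha(x,y)=1-4x^2+2x^4+2y-x^2y-x^4y-y^2+2x^2y^2-y^3$, $\beta(x,y)=-1+x^2-y$. *)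

theory Defs
  imports Complex_Main
begin

fun cheb_S :: "nat \<Rightarrow> real \<Rightarrow> real" where
  "cheb_S 0 z = 1"
| "cheb_S (Suc 0) z = z"
| "cheb_S (Suc (Suc n)) z = z * cheb_S (Suc n) z - cheb_S n z"

definition riley_lambda :: "real \<Rightarrow> real \<Rightarrow> real" where
  "riley_lambda x y = 9*x^2 - 12*x^4 + 4*x^6 - 5*y + 10*x^2*y + 2*x^4*y - 4*x^6*y
     - 11*x^2*y^2 + 8*x^4*y^2 + x^6*y^2 + 5*y^3 - 4*x^2*y^3 - 3*x^4*y^3 + 3*x^2*y^4 - y^5"

definition riley_alpha :: "real \<Rightarrow> real \<Rightarrow> real" where
  "riley_alpha x y = 1 - 4*x^2 + 2*x^4 + 2*y - x^2*y - x^4*y - y^2 + 2*x^2*y^2 - y^3"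

definition riley_beta :: "real \<Rightarrow> real \<Rightarrow> real" where
  "riley_beta x y = -1 + x^2 - y"

text \<open>Riley polynomial of K_l = K(10(l-1)+7, 4(l-1)+3), for l >= 2 (so that l-2 is a genuine index).\<close>
definition riley_phi :: "nat \<Rightarrow> real \<Rightarrow> real \<Rightarrow> real" where
  "riley_phi l x y = cheb_S (l - 1) (riley_lambda x y) * riley_alpha x y
                    - cheb_S (l - 2) (riley_lambda x y) * riley_beta x y"

end

theory Submission
  imports Defs
begin

text \<open>
  Put \<open>x = 2 cos (\<pi>/n)\<close>, so \<open>1 \<le> x\<^sup>2 \<le> 4\<close>. For \<open>y \<ge> max 2 (x\<^sup>2 - 1)\<close> we have
  \<open>\<alpha> < 0\<close>, and \<open>\<beta> < 0\<close> once \<open>y > x\<^sup>2 - 1\<close>; moreover \<open>\<lambda>\<close> falls from at least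
  \<open>min (x\<^sup>2 - 2) 1\<close> to at most \<open>-2\<close> between \<open>max 2 (x\<^sup>2 - 1)\<close> and \<open>4\<close>, so it attains every
  level \<open>c\<close> with \<open>-2 \<le> c \<le> x\<^sup>2 - 2\<close>, \<open>c < 1\<close> at a point where both \<open>\<alpha>\<close> and \<open>\<beta>\<close> are negative.

  Since \<open>S\<^sub>k (2 cos t) = sin ((k+1) t) / sin t\<close>, at \<open>c\<^sub>1 = -2 cos (\<pi>/(k+1))\<close> we get
  \<open>S\<^sub>k = 0, S\<^sub>k\<^sub>+\<^sub>1 = (-1)\<^sup>k\<close> and at \<open>c\<^sub>2 = -2 cos (\<pi>/(k+2))\<close> we get
  \<open>S\<^sub>k\<^sub>+\<^sub>1 = 0, S\<^sub>k = (-1)\<^sup>k\<close>. Hence for \<open>l = k + 2 \<ge> 3\<close> the Riley polynomial equals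
  \<open>(-1)\<^sup>k \<alpha>\<close> where \<open>\<lambda> = c\<^sub>1\<close> and \<open>-(-1)\<^sup>k \<beta>\<close> where \<open>\<lambda> = c\<^sub>2\<close>: opposite signs, and the
  intermediate value theorem gives a root beyond 2. The bounds on \<open>n\<close> are what make
  \<open>c\<^sub>1 \<le> x\<^sup>2 - 2\<close>. For \<open>l = 2\<close> the polynomial \<open>\<lambda>\<alpha> - \<beta>\<close> equals \<open>-\<beta> > 0\<close> where
  \<open>\<lambda> = 0\<close>, and for \<open>x\<^sup>2 \<ge> 12/5\<close> (i.e. \<open>n \<ge> 5\<close>) it is negative at \<open>max 2 (x\<^sup>2 - 1)\<close>.
\<close>

lemma cheb_S_cos: "sin t * cheb_S k (2 * cos t) = sin (real (Suc k) * t)"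
proof (induction k rule: induct_nat_012)
  case 0
  show ?case by simp
next
  case 1
  show ?case using sin_double[of t] by (simp add: mult_ac)
next
  case (ge2 k)
  define a where "a = real (Suc (Suc k)) * t"
  have "sin t * cheb_S (Suc (Suc k)) (2 * cos t)
      = 2 * cos t * (sin t * cheb_S (Suc k) (2 * cos t)) - sin t * cheb_S k (2 * cos t)"
    by (simp add: algebra_simps)
  also have "\<dots> = 2 * cos t * sin a - sin (a - t)"
    using ge2 by (simp add: a_def algebra_simps)
  also have "\<dots> = sin (a + t)"
    by (simp add: sin_add sin_diff algebra_simps)
  finally show ?case
    by (simp add: a_def algebra_simps)
qed

lemma isCont_cheb_S: "isCont (cheb_S k) z"
proof (induction k rule: induct_nat_012)
  case (ge2 k)
  have "cheb_S (Suc (Suc k)) = (\<lambda>z. z * cheb_S (Suc k) z - cheb_S k z)"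
    by (rule ext) simp
  with ge2 show ?case by (simp add: continuous_intros)
qed (simp_all add: cheb_S.simps(2)[abs_def])

lemma cheb_S_node:
  assumes "1 \<le> k"
  shows "cheb_S k (- 2 * cos (pi / real (Suc k))) = 0"
    and "cheb_S (Suc k) (- 2 * cos (pi / real (Suc k))) = (-1) ^ k"
proof -
  define t where "t = pi - pi / real (Suc k)"
  have c: "- 2 * cos (pi / real (Suc k)) = 2 * cos t"
    by (simp add: t_def)
  have "0 < t" "t < pi"
    using assms by (auto simp: t_def field_simps)
  then have sin_t: "sin t > 0"
    by (rule sin_gt_zero)
  have angle: "real (Suc k) * t = real k * pi"
    by (simp add: t_def field_simps)
  have "sin t * cheb_S k (2 * cos t) = sin (real k * pi)"
    by (simp only: cheb_S_cos angle)
  then show "cheb_S k (- 2 * cos (pi / real (Suc k))) = 0"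
    unfolding c using sin_t by simp
  have "sin t * cheb_S (Suc k) (2 * cos t) = sin (real (Suc k) * t + t)"
    unfolding cheb_S_cos by (simp add: distrib_right)
  also have "\<dots> = sin (real k * pi + t)"
    by (simp only: angle)
  also have "\<dots> = (-1) ^ k * sin t"
    by (simp add: sin_add)
  finally show "cheb_S (Suc k) (- 2 * cos (pi / real (Suc k))) = (-1) ^ k"
    unfolding c using sin_t by simp
qed

text \<open>The second identity follows from the first pair via \<open>S\<^sub>k\<^sub>+\<^sub>2 = c S\<^sub>k\<^sub>+\<^sub>1 - S\<^sub>k\<close>.\<close>
lemma cheb_S_node_Suc:
  shows "cheb_S (Suc k) (- 2 * cos (pi / real (Suc (Suc k)))) = 0"
    and "cheb_S k (- 2 * cos (pi / real (Suc (Suc k)))) = (-1) ^ k"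
  using cheb_S_node[of "Suc k"] by simp_all

lemma cos_pi_divide_mono:
  assumes "1 \<le> m" "m \<le> n"
  shows "cos (pi / real m) \<le> cos (pi / real n)"
proof (rule cos_monotone_0_pi_le)
  show "0 \<le> pi / real n" by simp
  show "pi / real n \<le> pi / real m"
    using assms by (intro divide_left_mono) auto
  show "pi / real m \<le> pi"
    using assms by (simp add: divide_le_eq)
qed

lemma two_cos_pi_divide_sq_mono:
  assumes "2 \<le> m" "m \<le> n"
  shows "(2 * cos (pi / real m))\<^sup>2 \<le> (2 * cos (pi / real n))\<^sup>2"
proof -
  have "0 \<le> cos (pi / 2)" by simp
  also have "\<dots> \<le> cos (pi / real m)"
    using cos_pi_divide_mono[of 2 m] assms by simp
  finally show ?thesis
    using cos_pi_divide_mono[of m n] assms by (intro power_mono) auto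
qed

lemma neg_two_cos_pi_divide_le:
  assumes "3 \<le> m"
  shows "- 2 * cos (pi / real m) \<le> -1"
  using cos_pi_divide_mono[of 3 m] assms cos_60 by simp

lemma cos_pi_divide_5: "4 * cos (pi / 5) ^ 2 = 2 * cos (pi / 5) + 1"
proof -
  define c where "c = cos (pi / 5)"
  have "4 * c ^ 3 - 3 * c = cos (3 * (pi / 5))"
    unfolding c_def by (rule cos_treble_cos[symmetric])
  also have "\<dots> = - cos (2 * (pi / 5))"
    using cos_pi_minus[of "2 * (pi / 5)"] by simp
  also have "\<dots> = 1 - 2 * c\<^sup>2"
    unfolding c_def by (simp only: cos_double_cos)
  finally have "(c + 1) * (4 * c\<^sup>2 - 2 * c - 1) = 0"
    by algebra
  moreover have "c > 0"
    unfolding c_def using pi_gt_zero by (intro cos_gt_zero_pi) linarith+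
  ultimately show ?thesis
    unfolding c_def by simp
qed

lemma two_cos_pi_divide_sq_bounds:
  assumes "3 \<le> n"
  shows "1 \<le> (2 * cos (pi / real n))\<^sup>2"
    and "4 \<le> n \<Longrightarrow> 2 \<le> (2 * cos (pi / real n))\<^sup>2"
    and "5 \<le> n \<Longrightarrow> 12/5 \<le> (2 * cos (pi / real n))\<^sup>2"
    and "(2 * cos (pi / real n))\<^sup>2 \<le> 4"
proof -
  show "1 \<le> (2 * cos (pi / real n))\<^sup>2"
    using two_cos_pi_divide_sq_mono[of 3 n] assms by (simp add: cos_60)
  show "2 \<le> (2 * cos (pi / real n))\<^sup>2" if "4 \<le> n"
    using two_cos_pi_divide_sq_mono[of 4 n] that by (simp add: cos_45 power_mult_distrib)
  show "12/5 \<le> (2 * cos (pi / real n))\<^sup>2" if "5 \<le> n"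
  proof -
    have "sqrt 2 / 2 \<le> cos (pi / 5)"
      using cos_pi_divide_mono[of 4 5] by (simp add: cos_45)
    moreover have "7/5 \<le> sqrt 2"
      by (rule real_le_rsqrt) (simp add: power2_eq_square)
    ultimately have "12/5 \<le> (2 * cos (pi / 5))\<^sup>2"
      using cos_pi_divide_5 by (simp add: power_mult_distrib)
    also have "\<dots> \<le> (2 * cos (pi / real n))\<^sup>2"
      using two_cos_pi_divide_sq_mono[of 5 n] that by simp
    finally show ?thesis .
  qed
  show "(2 * cos (pi / real n))\<^sup>2 \<le> 4"
    using abs_cos_le_one[of "pi / real n"] by (simp add: power_mult_distrib abs_square_le_1)
qed

lemma isCont_riley_lambda: "isCont (riley_lambda x) y"
  unfolding riley_lambda_def[abs_def] by (intro continuous_intros)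

lemma isCont_riley_phi: "isCont (riley_phi l x) y"
proof -
  have "isCont (\<lambda>y. cheb_S j (riley_lambda x y)) y" for j
    by (rule isCont_o2[OF isCont_riley_lambda isCont_cheb_S])
  then show ?thesis
    unfolding riley_phi_def[abs_def] riley_alpha_def riley_beta_def
    by (intro continuous_intros)
qed

lemma riley_lambda_at_2: "riley_lambda x 2 = x\<^sup>2 - 2"
  unfolding riley_lambda_def by algebra

lemma riley_lambda_at_sq_minus_1: "riley_lambda x (x\<^sup>2 - 1) = 1"
  unfolding riley_lambda_def by algebra

lemma riley_lambda_at_4_le:
  assumes "x\<^sup>2 \<le> 4"
  shows "riley_lambda x 4 \<le> -2"
proof -
  define u where "u = x\<^sup>2"
  have "riley_lambda x 4 = -16 + (u - 4) * (4 * (u - 13/2)\<^sup>2 + 8)"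
    unfolding riley_lambda_def u_def by algebra
  moreover have "(u - 4) * (4 * (u - 13/2)\<^sup>2 + 8) \<le> 0"
    using assms by (intro mult_nonpos_nonneg) (auto simp: u_def)
  ultimately show ?thesis by linarith
qed

lemma riley_alpha_neg:
  assumes "x\<^sup>2 \<le> 4" "2 \<le> y" "x\<^sup>2 - 1 \<le> y"
  shows "riley_alpha x y < 0"
proof -
  define u where "u = x\<^sup>2"
  show ?thesis
  proof (cases "u \<le> 3")
    case True
    define t where "t = y - 2"
    have "riley_alpha x y
        = -1 - 2*t - t\<^sup>2 - t^3 - 2*(3 - u)*(1 + t\<^sup>2) - t*((u - 3)*(u - 4))"
      unfolding riley_alpha_def t_def u_def by algebra
    moreover have "0 \<le> t" using assms by (simp add: t_def)
    moreover have "0 \<le> (u - 3)*(u - 4)"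
      using True by (intro mult_nonpos_nonpos) auto
    ultimately show ?thesis
      using True by (smt (verit) mult_nonneg_nonneg zero_le_power2 zero_le_power)
  next
    case False
    define t where "t = y - u + 1"
    have "riley_alpha x y = -1 - 2*t - t\<^sup>2 - t^3 - (u - 3)*(t + t\<^sup>2)"
      unfolding riley_alpha_def t_def u_def by algebra
    moreover have "0 \<le> t" using assms by (simp add: t_def u_def)
    ultimately show ?thesis
      using False by (smt (verit) mult_nonneg_nonneg zero_le_power2 zero_le_power)
  qed
qed

lemma riley_lambda_level_point:
  assumes "x\<^sup>2 \<le> 4" "-2 \<le> c" "c \<le> x\<^sup>2 - 2" "c < 1"
  obtains y where "2 \<le> y" "riley_lambda x y = c"
    and "riley_alpha x y < 0" and "riley_beta x y < 0"
proof -
  define y0 where "y0 = max 2 (x\<^sup>2 - 1)"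
  have "c \<le> riley_lambda x y0"
    using assms by (auto simp: y0_def max_def riley_lambda_at_2 riley_lambda_at_sq_minus_1)
  moreover have "riley_lambda x 4 \<le> c"
    using riley_lambda_at_4_le[OF assms(1)] assms(2) by simp
  moreover have "y0 \<le> 4"
    using assms(1) by (simp add: y0_def)
  ultimately obtain y where y: "y0 \<le> y" "riley_lambda x y = c"
    using IVT2[of "riley_lambda x" 4 c y0] isCont_riley_lambda by blast
  have "y \<noteq> x\<^sup>2 - 1"
    using y(2) \<open>c < 1\<close> riley_lambda_at_sq_minus_1[of x] by auto
  with y(1) have "x\<^sup>2 - 1 < y"
    by (simp add: y0_def)
  then show ?thesis
    using that[of y] y assms(1) riley_alpha_neg[of x y]
    by (simp add: y0_def riley_beta_def)
qed

lemma IVT_sign_change: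
  fixes f :: "real \<Rightarrow> real"
  assumes "\<And>x. isCont f x" "f a * f b < 0"
  shows "\<exists>x. min a b < x \<and> x < max a b \<and> f x = 0"
proof -
  have "\<exists>x. min a b \<le> x \<and> x \<le> max a b \<and> f x = 0"
  proof (cases "f (min a b) \<le> 0")
    case True
    then have "0 \<le> f (max a b)"
      using assms(2) by (cases "a \<le> b") (auto simp: mult_less_0_iff)
    then show ?thesis
      using IVT[of f "min a b" 0 "max a b"] True assms(1) by simp
  next
    case False
    then have "f (max a b) \<le> 0"
      using assms(2) by (cases "a \<le> b") (auto simp: mult_less_0_iff)
    then show ?thesis
      using IVT2[of f "max a b" 0 "min a b"] False assms(1) by simp
  qed
  moreover have "f a \<noteq> 0" "f b \<noteq> 0"
    using assms(2) by auto
  ultimately show ?thesis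
    by (metis min_def max_def order.not_eq_order_implies_strict)
qed

lemma riley_phi_root_above_2:
  assumes "2 \<le> y1" "2 \<le> y2" "riley_phi l x y1 * riley_phi l x y2 < 0"
  shows "\<exists>y > 2. riley_phi l x y = 0"
  using IVT_sign_change[OF isCont_riley_phi assms(3)] assms(1,2) by force

lemma riley_phi_2_root:
  assumes "12/5 \<le> x\<^sup>2" "x\<^sup>2 \<le> 4"
  shows "\<exists>y > 2. riley_phi 2 x y = 0"
proof -
  have phi: "riley_phi 2 x y = riley_lambda x y * riley_alpha x y - riley_beta x y" for y
    by (simp add: riley_phi_def)
  obtain y1 where y1: "2 \<le> y1" "riley_phi 2 x y1 < 0"
  proof (cases "x\<^sup>2 \<le> 3")
    case True
    have "riley_phi 2 x 2 = 2 * (3 - x\<^sup>2)\<^sup>2 - 1"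
      unfolding phi riley_lambda_at_2 riley_alpha_def riley_beta_def by algebra
    moreover have "(3 - x\<^sup>2)\<^sup>2 \<le> (3/5)\<^sup>2"
      using True assms(1) by (intro power_mono) auto
    ultimately show ?thesis
      using that[of 2] by (simp add: power2_eq_square)
  next
    case False
    have "riley_phi 2 x (x\<^sup>2 - 1) = riley_alpha x (x\<^sup>2 - 1)"
      by (simp add: phi riley_lambda_at_sq_minus_1 riley_beta_def)
    then show ?thesis
      using that[of "x\<^sup>2 - 1"] False riley_alpha_neg[OF assms(2)] by simp
  qed
  obtain y2 where "2 \<le> y2" "riley_lambda x y2 = 0" "riley_beta x y2 < 0"
    using riley_lambda_level_point[of x 0] assms by auto
  then have "2 \<le> y2" "riley_phi 2 x y2 > 0"
    by (simp_all add: phi)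
  with y1 show ?thesis
    by (intro riley_phi_root_above_2[of y1 y2]) (simp_all add: mult_neg_pos)
qed

lemma riley_phi_Suc_Suc_root:
  assumes "1 \<le> k" "1 \<le> x\<^sup>2" "x\<^sup>2 \<le> 4"
    and "- 2 * cos (pi / real (Suc k)) \<le> x\<^sup>2 - 2"
  shows "\<exists>y > 2. riley_phi (Suc (Suc k)) x y = 0"
proof -
  define c1 where "c1 = - 2 * cos (pi / real (Suc k))"
  define c2 where "c2 = - 2 * cos (pi / real (Suc (Suc k)))"
  have phi: "riley_phi (Suc (Suc k)) x y
      = cheb_S (Suc k) (riley_lambda x y) * riley_alpha x y
        - cheb_S k (riley_lambda x y) * riley_beta x y" for y
    by (simp add: riley_phi_def)
  have "0 \<le> cos (pi / real (Suc k))"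
    using assms(1) by (intro cos_ge_zero) (auto simp: field_simps)
  then have "c1 < 1" by (simp add: c1_def)
  then obtain y1 where y1: "2 \<le> y1" "riley_lambda x y1 = c1" "riley_alpha x y1 < 0"
    using riley_lambda_level_point[of x c1] assms(3,4) by (auto simp: c1_def)
  have "c2 \<le> -1"
    unfolding c2_def using assms(1) by (intro neg_two_cos_pi_divide_le) simp
  then obtain y2 where y2: "2 \<le> y2" "riley_lambda x y2 = c2" "riley_beta x y2 < 0"
    using riley_lambda_level_point[of x c2] assms(2,3) by (auto simp: c2_def)
  have "riley_phi (Suc (Suc k)) x y1 = (-1) ^ k * riley_alpha x y1"
    using cheb_S_node[OF assms(1)] by (simp add: phi y1(2) c1_def)
  moreover have "riley_phi (Suc (Suc k)) x y2 = - ((-1) ^ k * riley_beta x y2)"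
    using cheb_S_node_Suc by (simp add: phi y2(2) c2_def)
  ultimately have "riley_phi (Suc (Suc k)) x y1 * riley_phi (Suc (Suc k)) x y2
      = - ((-1) ^ k * (-1) ^ k * (riley_alpha x y1 * riley_beta x y2))"
    by (simp add: algebra_simps)
  also have "\<dots> < 0"
    using y1(3) y2(3) by (simp add: mult_neg_neg flip: power_add)
  finally show ?thesis
    using riley_phi_root_above_2 y1(1) y2(1) by blast
qed

theorem theorem6p1:
  fixes l n :: nat
  assumes "l \<ge> 2"
    and "(l = 2 \<and> n \<ge> 5) \<or> (l = 3 \<and> n \<ge> 4) \<or> (l \<ge> 4 \<and> n \<ge> 3)"
  shows "\<exists>y::real. y > 2 \<and> riley_phi l (2 * cos (pi / real n)) y = 0"
proof -
  define x where "x = 2 * cos (pi / real n)"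
  have n3: "3 \<le> n" using assms(2) by auto
  note x_sq = two_cos_pi_divide_sq_bounds[OF n3, folded x_def]
  show ?thesis
  proof (cases "l = 2")
    case True
    then have "5 \<le> n" using assms(2) by simp
    with True show ?thesis
      using riley_phi_2_root[OF x_sq(3) x_sq(4)] by (simp add: x_def)
  next
    case False
    define k where "k = l - 2"
    have l: "l = Suc (Suc k)" and k: "1 \<le> k"
      using assms(1) False by (simp_all add: k_def)
    have "- 2 * cos (pi / real (Suc k)) \<le> x\<^sup>2 - 2"
    proof (cases "k = 1")
      case True
      then have "4 \<le> n" using l assms(2) by simp
      with True show ?thesis using x_sq(2) by simp
    next
      case False
      then show ?thesis using neg_two_cos_pi_divide_le[of "Suc k"] k x_sq(1) by simp
    qed
    then show ?thesis
      using riley_phi_Suc_Suc_root[OF k x_sq(1) x_sq(4)] l by (simp add: x_def)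
  qed
qed

end
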